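(* Let $p_1=2<p_2=3<p_3=5<\cdots$ denote the primes in increasing order, and fix an integer $K\ge 1$. Starting from the set $M=\{4,5,6,\dots\}$ of integers $\ge 4$, remove every integer of the form $2np_k$ or $np_k-1$ with $n\ge 2$ an integer and $1\le k\le K$. Then an integer $m$ with $4\le m<p_{K+1}^2-2$ remains after this removal if and only if $m=2q$ for a Sophie Germain prime $q$, i.e. $m=2q$ where both $q$ and $2q+1$ are prime.
   Context: A prime $q$ is a Sophie Germain prime if $2q+1$ is also prime (then $2q+1$ is called a safe prime). *)

theory Defs
  imports Main "HOL-Computational_Algebra.Primes"
begin

text \<open>The k-th prime (1-indexed): the unique prime with exactly k-1 primes below it,
  so pr 1 = 2, pr 2 = 3, pr 3 = 5, ...\<close>
definition pr :: "nat \<Rightarrow> nat" where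
  "pr k = (THE p. prime p \<and> card {q. prime q \<and> q < p} = k - 1)"

definition removed :: "nat \<Rightarrow> int \<Rightarrow> bool" where
  "removed K m \<longleftrightarrow> (\<exists>n::int. \<exists>k::nat. n \<ge> 2 \<and> 1 \<le> k \<and> k \<le> K \<and>
      (m = 2 * n * int (pr k) \<or> m = n * int (pr k) - 1))"

definition remains :: "nat \<Rightarrow> int \<Rightarrow> bool" where
  "remains K m \<longleftrightarrow> m \<ge> 4 \<and> \<not> removed K m"

end

theory Submission
  imports Defs "HOL-Library.Infinite_Set"
begin

text \<open>An integer \<open>2 \<le> x < P\<^sup>2\<close> is composite exactly when it is a proper multiple of a prime
  below \<open>P\<close> (sieve of Eratosthenes), and the primes below \<open>p\<^sub>K\<^sub>+\<^sub>1\<close> are \<open>p\<^sub>1, \<dots>, p\<^sub>K\<close>.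
  Hence removing the numbers \<open>2 n p\<^sub>k\<close> deletes the \<open>m = 2 q\<close> with \<open>q\<close> composite, removing the
  numbers \<open>n p\<^sub>k - 1\<close> deletes the \<open>m\<close> with \<open>m + 1\<close> composite, and an odd \<open>m \<ge> 4\<close> is always
  deleted because \<open>m + 1\<close> is then even and at least 6.\<close>

lemma card_less_enumerate:
  fixes S :: "nat set"
  assumes "infinite S"
  shows "card {s \<in> S. s < enumerate S n} = n"
proof -
  have "{s \<in> S. s < enumerate S n} = enumerate S ` {..<n}"
  proof (intro set_eqI iffI)
    fix s assume s: "s \<in> {s \<in> S. s < enumerate S n}"
    then obtain i where "s = enumerate S i"
      using range_enumerate[OF assms] by blast
    with s show "s \<in> enumerate S ` {..<n}"
      using assms by auto
  qed (use assms enumerate_in_set in auto)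
  also have "card \<dots> = n"
    using inj_enumerate[OF assms] by (simp add: card_image inj_on_subset)
  finally show ?thesis .
qed

text \<open>Because of the truncated subtraction this also holds for \<open>k = 0\<close>, where \<open>pr 0 = pr 1\<close>.\<close>
lemma pr_eq_enumerate_primes: "pr k = enumerate {p. prime p} (k - 1)"
  unfolding pr_def
proof (rule the_equality)
  fix p :: nat assume p: "prime p \<and> card {q. prime q \<and> q < p} = k - 1"
  then obtain i where "p = enumerate {p. prime p} i"
    using range_enumerate[OF primes_infinite] by blast
  with p show "p = enumerate {p. prime p} (k - 1)"
    using card_less_enumerate[OF primes_infinite] by auto
qed (use card_less_enumerate[OF primes_infinite] enumerate_in_set[OF primes_infinite] in auto)

lemma prime_less_pr_Suc_iff:
  "prime p \<and> p < pr (Suc K) \<longleftrightarrow> (\<exists>k. 1 \<le> k \<and> k \<le> K \<and> pr k = p)"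
proof
  assume p: "prime p \<and> p < pr (Suc K)"
  then obtain i where i: "p = enumerate {p. prime p} i"
    using range_enumerate[OF primes_infinite] by blast
  with p have "i < K"
    using primes_infinite by (simp add: pr_eq_enumerate_primes)
  with i show "\<exists>k. 1 \<le> k \<and> k \<le> K \<and> pr k = p"
    by (intro exI[of _ "Suc i"]) (simp add: pr_eq_enumerate_primes)
qed (use enumerate_in_set[OF primes_infinite] primes_infinite
      in \<open>auto simp: pr_eq_enumerate_primes\<close>)

lemma prime_factor_square_le:
  fixes x :: nat
  assumes "1 < x" "\<not> prime x"
  obtains p where "prime p" "p dvd x" "p\<^sup>2 \<le> x"
proof -
  obtain a b where ab: "x = a * b" "1 < a" "1 < b" "a \<le> b"
  proof -
    obtain d where d: "d dvd x" "d \<noteq> 1" "d \<noteq> x"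
      using assms prime_nat_iff by auto
    then obtain e where "x = d * e" by blast
    with assms d have "1 < d" "1 < e"
      by (auto simp: nat_neq_iff)
    with \<open>x = d * e\<close> show thesis
      using that[of d e] that[of e d] by (cases "d \<le> e") auto
  qed
  obtain p where p: "prime p" "p dvd a"
    using prime_factor_nat[of a] ab by auto
  have "p\<^sup>2 \<le> a * b"
    using dvd_imp_le[OF p(2)] ab by (simp add: power2_eq_square mult_mono)
  with p ab show thesis
    using that by auto
qed

definition proper_multiple_of_prime_below :: "nat \<Rightarrow> int \<Rightarrow> bool" where
  "proper_multiple_of_prime_below P x \<longleftrightarrow>
     (\<exists>p n. prime p \<and> p < P \<and> 2 \<le> n \<and> x = n * int p)"

lemma not_prime_iff_proper_multiple_of_prime_below:
  fixes x :: int
  assumes "2 \<le> x" "x < int P ^ 2"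
  shows "\<not> prime x \<longleftrightarrow> proper_multiple_of_prime_below P x"
proof
  assume "\<not> prime x"
  define y where "y = nat x"
  have y: "x = int y"
    using assms(1) by (simp add: y_def)
  have "1 < y" "\<not> prime y"
    using assms(1) \<open>\<not> prime x\<close> by (simp_all add: y)
  then obtain p where p: "prime p" "p dvd y" "p\<^sup>2 \<le> y"
    by (rule prime_factor_square_le)
  then obtain n where n: "y = n * p"
    by (metis dvdE mult.commute)
  have "p \<le> n"
    using p(3) n prime_gt_0_nat[OF p(1)] by (simp add: power2_eq_square)
  have "int p ^ 2 < int P ^ 2"
    using p(3) assms(2) y by (simp flip: of_nat_power)
  then have "p < P"
    using power_less_imp_less_base[of "int p" 2 "int P"] by simp
  with p(1) n y prime_ge_2_nat[OF p(1)] \<open>p \<le> n\<close>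
  show "proper_multiple_of_prime_below P x"
    unfolding proper_multiple_of_prime_below_def
    by (intro exI[of _ p] exI[of _ "int n"]) simp
next
  assume "proper_multiple_of_prime_below P x"
  then obtain p n where p: "prime p" "2 \<le> n" "x = n * int p"
    unfolding proper_multiple_of_prime_below_def by blast
  show "\<not> prime x"
  proof
    assume "prime x"
    then have "is_unit n \<or> is_unit (int p)"
      using p(3) by (intro irreducibleD prime_elem_imp_irreducible prime_imp_prime_elem)
    then show False
      using p(2) prime_ge_2_nat[OF p(1)] by auto
  qed
qed

lemma removed_iff_proper_multiple_of_prime_below:
  "removed K m \<longleftrightarrow>
     (\<exists>q. m = 2 * q \<and> proper_multiple_of_prime_below (pr (Suc K)) q) \<or>
     proper_multiple_of_prime_below (pr (Suc K)) (m + 1)"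
proof -
  have "removed K m \<longleftrightarrow> (\<exists>k. 1 \<le> k \<and> k \<le> K \<and>
      (\<exists>n. 2 \<le> n \<and> (m = 2 * (n * int (pr k)) \<or> m + 1 = n * int (pr k))))"
    unfolding removed_def by (simp add: mult.assoc eq_diff_eq) blast
  also have "\<dots> \<longleftrightarrow> (\<exists>p. prime p \<and> p < pr (Suc K) \<and>
      (\<exists>n. 2 \<le> n \<and> (m = 2 * (n * int p) \<or> m + 1 = n * int p)))"
    using prime_less_pr_Suc_iff by metis
  finally show ?thesis
    unfolding proper_multiple_of_prime_below_def by blast
qed

theorem mainTheorem2:
  fixes K :: nat and m :: int
  assumes "K \<ge> 1"
    and "4 \<le> m" and "m < int (pr (K + 1))^2 - 2"
  shows "remains K m \<longleftrightarrow> (\<exists>q::int. m = 2 * q \<and> prime q \<and> prime (2 * q + 1))"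
proof -
  let ?P = "pr (Suc K)"
  have half: "proper_multiple_of_prime_below ?P q \<longleftrightarrow> \<not> prime q" if "m = 2 * q" for q
    using assms(2,3) that by (intro not_prime_iff_proper_multiple_of_prime_below[symmetric]) auto
  have succ: "proper_multiple_of_prime_below ?P (m + 1) \<longleftrightarrow> \<not> prime (m + 1)"
    using assms(2,3) by (intro not_prime_iff_proper_multiple_of_prime_below[symmetric]) auto
  have "remains K m \<longleftrightarrow> (\<forall>q. m = 2 * q \<longrightarrow> prime q) \<and> prime (m + 1)"
    unfolding remains_def removed_iff_proper_multiple_of_prime_below
    using assms(2) half succ by blast
  also have "\<dots> \<longleftrightarrow> (\<exists>q. m = 2 * q \<and> prime q \<and> prime (2 * q + 1))"
  proof
    assume sieved: "(\<forall>q. m = 2 * q \<longrightarrow> prime q) \<and> prime (m + 1)"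
    then have "odd (m + 1)"
      using assms(2) by (intro prime_odd_int) auto
    then obtain q where "m = 2 * q"
      by (auto elim: evenE)
    with sieved show "\<exists>q. m = 2 * q \<and> prime q \<and> prime (2 * q + 1)"
      by auto
  qed auto
  finally show ?thesis .
qed

end
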